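(* For every $n\in\mathbb{Z}$ and $x\in\mathbb{R}$, $$E_{n+1}^k(x)=e^{x}\,E_{-n}^k(-x).$$
   Context: Fix $k\ge 0$. Partial order on $\mathbb{Z}$: $j\triangleleft n$ iff either ($|j|<|n|$ and $|n|-|j|$ is a positive even integer) or ($|j|=|n|$ and $n<j$). Let $\delta_k(x)=|2\sin x|^{2k}$ and $(f,g)_k=\frac{1}{2\pi}\int_0^{2\pi} f(x)\overline{g(x)}\delta_k(x)\,dx$. The non-symmetric Heckman–Opdam polynomials $E_n^k$, $n\in\mathbb{Z}$, are the functions on $\mathbb{R}$ of the form $E_n^k(x)=e^{nx}+\sum_{j\triangleleft n}c_{n,j}e^{jx}$ (finite sum) such that $(E_n^k(i\,\cdot),e^{ij\,\cdot})_k=0$ for all $j\triangleleft n$. It is known that they are eigenfunctions of the Cherednik operator $T^k f(x)=f'(x)+2k\frac{f(x)-f(-x)}{1-e^{-2x}}-kf(x)$: $T^kE_n^k=\tilde n E_n^k$, where $\tilde n=n+k$ if $n\ge0$ and $\tilde n=n-k$ if $n<0$. *)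

theory Defs
  imports "HOL-Analysis.Analysis"
begin

definition tri_less :: "int \<Rightarrow> int \<Rightarrow> bool" where
  "tri_less j n \<longleftrightarrow>
     (\<bar>j\<bar> < \<bar>n\<bar> \<and> even (\<bar>n\<bar> - \<bar>j\<bar>)) \<or> (\<bar>j\<bar> = \<bar>n\<bar> \<and> n < j)"

definition supp_set :: "int \<Rightarrow> int set" where
  "supp_set n = insert n {j. tri_less j n}"

text \<open>Weight |2 sin x|^(2k) (with the convention 0^0 = 1).\<close>
definition delta :: "real \<Rightarrow> real \<Rightarrow> real" where
  "delta k x = (if k = 0 then 1 else \<bar>2 * sin x\<bar> powr (2 * k))"

definition ip :: "real \<Rightarrow> (real \<Rightarrow> complex) \<Rightarrow> (real \<Rightarrow> complex) \<Rightarrow> complex" where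
  "ip k f g = (1 / (2 * pi)) *
     integral {0..2*pi} (\<lambda>x. f x * cnj (g x) * complex_of_real (delta k x))"

text \<open>c is the coefficient vector of the non-symmetric Heckman--Opdam polynomial E_n^k:
  E(x) = sum_m c m * e^(m x), leading coefficient 1, other coefficients supported on
  predecessors of n, and E(i .) orthogonal to e^(i j .) for all predecessors j.\<close>
definition HO_coeffs :: "real \<Rightarrow> int \<Rightarrow> (int \<Rightarrow> complex) \<Rightarrow> bool" where
  "HO_coeffs k n c \<longleftrightarrow>
     c n = 1 \<and> (\<forall>j. j \<notin> supp_set n \<longrightarrow> c j = 0) \<and>
     (\<forall>j. tri_less j n \<longrightarrow>
        ip k (\<lambda>x. \<Sum>m\<in>supp_set n. c m * exp (\<i> * of_int m * of_real x))
             (\<lambda>x. exp (\<i> * of_int j * of_real x)) = 0)"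

definition HO_E :: "real \<Rightarrow> int \<Rightarrow> real \<Rightarrow> complex" where
  "HO_E k n x = (\<Sum>m\<in>supp_set n. (THE c. HO_coeffs k n c) m * exp (of_int m * of_real x))"

end

theory Submission
  imports Defs "HOL-Library.Function_Algebras"
begin

(* The Gram matrix (e^(imx), e^(ijx))_k depends only on m - j and, because
   delta_k(2 pi - x) = delta_k(x), it is even in m - j.  The reflection m |-> 1 - m maps the
   predecessors of -n onto those of n + 1, so it carries the orthogonality conditions defining
   E_(-n) to those defining E_(n+1).  The Gram form is positive definite, hence these conditions
   have exactly one solution, and the coefficient of e^(mx) in E_(n+1) is the coefficient of
   e^((1-m)x) in E_(-n). *)

section \<open>Finite square linear systems\<close>

context vector_space
begin

lemma span_eq_if_independent_card_ge:
  assumes A: "finite A" and B: "independent B" "B \<subseteq> span A" and card: "card A \<le> card B"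
  shows "span B = span A"
proof
  show "span B \<subseteq> span A"
    using B(2) by (simp add: span_minimal)
  have "a \<in> span B" if "a \<in> A" for a
  proof (rule ccontr)
    assume a: "a \<notin> span B"
    then have "independent (insert a B)" "insert a B \<subseteq> span A"
      using B that independent_insertI span_base by auto
    then have "finite (insert a B) \<and> card (insert a B) \<le> card A"
      by (rule independent_span_bound[OF A])
    moreover have "a \<notin> B"
      using a span_base by blast
    ultimately show False
      using card by auto
  qed
  then show "span A \<subseteq> span B"
    by (simp add: span_minimal subsetI)
qed

lemma linear_inj_on_span_imp_surj_on:
  assumes f: "Vector_Spaces.linear scale scale f" and B: "finite B" "independent B"
    and inj: "inj_on f (span B)" and into: "f ` B \<subseteq> span B"
  shows "span B \<subseteq> f ` span B"
proof -
  interpret f: Vector_Spaces.linear scale scale f by (rule f)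
  have "independent (f ` B)"
    using f.independent_injective_image[OF B(2) inj] .
  moreover have "card (f ` B) = card B"
    using inj by (intro card_image inj_on_subset[OF inj span_superset])
  ultimately have "span (f ` B) = span B"
    using into B by (intro span_eq_if_independent_card_ge) auto
  then show ?thesis
    by (simp add: f.span_image)
qed

end

interpretation pointwise: vector_space "\<lambda>r (f :: 'i \<Rightarrow> 'b :: field) x. r * f x"
  by unfold_locales (auto simp: fun_eq_iff algebra_simps)

lemma sum_apply: "(\<Sum>t\<in>S. f t) x = (\<Sum>t\<in>S. f t x)"
  by (induction S rule: infinite_finite_induct) auto

lemma pointwise_span_indicators:
  assumes "finite T"
  shows "pointwise.span ((\<lambda>t. indicator {t} :: 'a \<Rightarrow> 'b :: field) ` T) = {a. \<forall>j. j \<notin> T \<longrightarrow> a j = 0}"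
    (is "_ = ?V")
proof
  have "pointwise.subspace ?V"
    unfolding pointwise.subspace_def by auto
  then show "pointwise.span ((\<lambda>t. indicator {t}) ` T) \<subseteq> ?V"
    by (intro pointwise.span_minimal) (auto simp: indicator_def)
  show "?V \<subseteq> pointwise.span ((\<lambda>t. indicator {t}) ` T)"
  proof
    fix a assume "a \<in> ?V"
    then have "a = (\<Sum>t\<in>T. (\<lambda>x. a t * indicator {t} x))"
      using assms by (auto simp: fun_eq_iff sum_apply indicator_def if_distrib Int_insert_right
          cong: if_cong)
    also have "\<dots> \<in> pointwise.span ((\<lambda>t. indicator {t}) ` T)"
      by (intro pointwise.span_sum pointwise.span_scale pointwise.span_base) auto
    finally show "a \<in> pointwise.span ((\<lambda>t. indicator {t}) ` T)" .
  qed
qed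

lemma pointwise_independent_indicators:
  assumes "finite T"
  shows "pointwise.independent ((\<lambda>t. indicator {t} :: 'a \<Rightarrow> 'b :: field) ` T)"
proof (rule pointwise.independent_if_scalars_zero)
  fix f :: "('a \<Rightarrow> 'b) \<Rightarrow> 'b" and v :: "'a \<Rightarrow> 'b"
  assume sum0: "(\<Sum>u\<in>(\<lambda>t. indicator {t}) ` T. (\<lambda>x. f u * u x)) = 0"
    and "v \<in> (\<lambda>t. indicator {t}) ` T"
  then obtain t where t: "t \<in> T" "v = indicator {t}" by auto
  have inj: "inj_on (\<lambda>t. indicator {t} :: 'a \<Rightarrow> 'b) T"
    by (rule inj_onI) (metis indicator_simps(1) indicator_simps(2) singletonD singletonI zero_neq_one)
  have "0 = (\<Sum>u\<in>(\<lambda>t. indicator {t}) ` T. f u * u t)"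
    using sum0 by (simp add: sum_apply fun_eq_iff)
  also have "\<dots> = f v"
    using assms t by (simp add: sum.reindex[OF inj] indicator_def)
  finally show "f v = 0" by simp
qed (use assms in simp)

lemma square_system_solvable_if_injective:
  fixes G :: "'a \<Rightarrow> 'a \<Rightarrow> 'b :: field"
  assumes T: "finite T"
    and inj: "\<And>a m. (\<And>j. j \<in> T \<Longrightarrow> (\<Sum>m\<in>T. a m * G m j) = 0) \<Longrightarrow> m \<in> T \<Longrightarrow> a m = 0"
  shows "\<exists>a. \<forall>j\<in>T. (\<Sum>m\<in>T. a m * G m j) = b j"
proof -
  define L where "L a j = (if j \<in> T then \<Sum>m\<in>T. a m * G m j else 0)" for a j
  define E where "E = (\<lambda>t. indicator {t} :: 'a \<Rightarrow> 'b) ` T"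
  have span: "pointwise.span E = {a. \<forall>j. j \<notin> T \<longrightarrow> a j = 0}"
    unfolding E_def using pointwise_span_indicators[OF T] .
  have "Vector_Spaces.linear (\<lambda>r f x. r * f x) (\<lambda>r f x. r * f x) L"
    unfolding Vector_Spaces.linear_iff
    by (auto simp: pointwise.vector_space_axioms L_def fun_eq_iff sum.distrib
        algebra_simps sum_distrib_left)
  moreover have "inj_on L (pointwise.span E)"
  proof (rule inj_onI)
    fix a a' assume a: "a \<in> pointwise.span E" "a' \<in> pointwise.span E" and eq: "L a = L a'"
    have "(\<Sum>m\<in>T. (a m - a' m) * G m j) = 0" if "j \<in> T" for j
      using fun_cong[OF eq, of j] that by (simp add: L_def algebra_simps sum_subtractf)
    then have "a m = a' m" if "m \<in> T" for m
      using inj[of "\<lambda>m. a m - a' m" m] that by simp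
    with a show "a = a'"
      unfolding span by fastforce
  qed
  moreover have "L ` E \<subseteq> pointwise.span E"
    unfolding span by (auto simp: L_def)
  ultimately have "pointwise.span E \<subseteq> L ` pointwise.span E"
    using T pointwise_independent_indicators[OF T]
    by (intro pointwise.linear_inj_on_span_imp_surj_on) (auto simp: E_def)
  moreover have "(\<lambda>j. if j \<in> T then b j else 0) \<in> pointwise.span E"
    unfolding span by simp
  ultimately have "(\<lambda>j. if j \<in> T then b j else 0) \<in> L ` pointwise.span E"
    by (rule subsetD)
  then obtain a where "L a = (\<lambda>j. if j \<in> T then b j else 0)"
    by auto
  then show ?thesis
    unfolding L_def fun_eq_iff by metis
qed

section \<open>The order and the support sets\<close>

lemma tri_less_reflect: "tri_less j (n + 1) \<longleftrightarrow> tri_less (1 - j) (- n)"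
  unfolding tri_less_def
  by (cases "n \<ge> 0"; cases "j \<ge> 1") (auto simp: abs_if algebra_simps, presburger+)

lemma tri_less_irrefl: "\<not> tri_less n n"
  unfolding tri_less_def by auto

lemma finite_tri_less: "finite {j. tri_less j n}"
proof (rule finite_subset)
  show "{j. tri_less j n} \<subseteq> {-\<bar>n\<bar>..\<bar>n\<bar>}"
    unfolding tri_less_def by auto
qed simp

lemma finite_supp_set: "finite (supp_set n)"
  unfolding supp_set_def using finite_tri_less by simp

lemma sum_supp_set: "(\<Sum>m\<in>supp_set n. f m) = f n + (\<Sum>m\<in>{j. tri_less j n}. f m)"
  unfolding supp_set_def using finite_tri_less tri_less_irrefl by simp

lemma supp_set_reflect_iff: "j \<in> supp_set (n + 1) \<longleftrightarrow> 1 - j \<in> supp_set (- n)"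
  unfolding supp_set_def tri_less_reflect by auto

lemma sum_supp_set_reflect:
  "(\<Sum>m\<in>supp_set (n + 1). f (1 - m)) = (\<Sum>m\<in>supp_set (- n). f m)"
proof -
  have "j \<in> (\<lambda>m. 1 - m) ` supp_set (- n) \<longleftrightarrow> 1 - j \<in> supp_set (- n)" for j
    by (auto intro: rev_image_eqI[of "1 - j"])
  then have "supp_set (n + 1) = (\<lambda>m. 1 - m) ` supp_set (- n)"
    by (simp add: set_eq_iff supp_set_reflect_iff)
  moreover have "inj_on (\<lambda>m::int. 1 - m) (supp_set (- n))"
    by (auto simp: inj_on_def)
  ultimately show ?thesis
    by (simp add: sum.reindex)
qed

section \<open>The weight and the inner product\<close>

abbreviation expi :: "int \<Rightarrow> real \<Rightarrow> complex" where
  "expi m x \<equiv> exp (\<i> * of_int m * of_real x)"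

lemma continuous_on_delta:
  assumes "k \<ge> 0"
  shows "continuous_on S (delta k)"
proof (cases "k = 0")
  case False
  with assms have "continuous_on S (\<lambda>x. \<bar>2 * sin x\<bar> powr (2 * k))"
    by (intro continuous_on_powr' continuous_intros) auto
  with False show ?thesis
    unfolding delta_def by simp
qed (simp add: delta_def)

lemma delta_nonneg: "delta k x \<ge> 0"
  unfolding delta_def by auto

lemma delta_pos: "sin x \<noteq> 0 \<Longrightarrow> delta k x > 0"
  unfolding delta_def by auto

lemma delta_reflect: "delta k (2 * pi - x) = delta k x"
  unfolding delta_def by (simp add: sin_diff)

lemma expi_2pi: "expi m (2 * pi) = 1"
  using exp_integer_2pi[of "of_int m"] by (simp add: mult_ac)

lemma expi_reflect: "expi m (2 * pi - x) = expi (- m) x"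
  using expi_2pi[of m] by (simp add: right_diff_distrib exp_diff exp_minus field_simps)

lemma integral_reflect_2pi:
  "integral {0..2*pi} (\<lambda>x. f (2*pi - x)) = integral {0..2*pi} (f :: real \<Rightarrow> complex)"
proof -
  have "integral {-0..-(-(2*pi))} (\<lambda>x. f (-x + 2*pi)) = integral {-(2*pi)..0} (\<lambda>x. f (x + 2*pi))"
    by (rule Henstock_Kurzweil_Integration.integral_reflect_real)
  also have "\<dots> = integral {0..2*pi} f"
    using integral_shift_Icc_real[of "-(2*pi)" 0 f "2*pi"] by (simp add: o_def add.commute)
  finally show ?thesis
    unfolding minus_zero minus_minus by (simp add: add.commute[of "- _"])
qed

lemma integral_expi: "integral {0..2*pi} (expi l) = (if l = 0 then 2 * pi else 0)"
proof (cases "l = 0")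
  case False
  with expi_2pi[of l] show ?thesis
    using Kronecker_Approximation_Theorem.integral_exp[of "2 * pi" "\<i> * of_int l"] by simp
qed (simp add: scaleR_conv_of_real)

lemma ip_sum_left:
  assumes "k \<ge> 0" "finite S" "\<And>m. m \<in> S \<Longrightarrow> continuous_on {0..2*pi} (f m)"
    "continuous_on {0..2*pi} g"
  shows "ip k (\<lambda>x. \<Sum>m\<in>S. c m * f m x) g = (\<Sum>m\<in>S. c m * ip k (f m) g)"
proof -
  have "integral {0..2*pi} (\<lambda>x. (\<Sum>m\<in>S. c m * f m x) * cnj (g x) * of_real (delta k x))
      = (\<Sum>m\<in>S. integral {0..2*pi} (\<lambda>x. c m * (f m x * cnj (g x) * of_real (delta k x))))"
    unfolding sum_distrib_right mult.assoc using assms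
    by (intro integral_sum integrable_continuous_interval continuous_intros continuous_on_delta)
      auto
  then show ?thesis unfolding ip_def by (simp add: sum_distrib_left mult.left_commute)
qed

lemma ip_sum_right:
  assumes "k \<ge> 0" "finite S" "\<And>m. m \<in> S \<Longrightarrow> continuous_on {0..2*pi} (g m)"
    "continuous_on {0..2*pi} f"
  shows "ip k f (\<lambda>x. \<Sum>m\<in>S. c m * g m x) = (\<Sum>m\<in>S. cnj (c m) * ip k f (g m))"
proof -
  have "integral {0..2*pi} (\<lambda>x. f x * cnj (\<Sum>m\<in>S. c m * g m x) * of_real (delta k x))
      = integral {0..2*pi} (\<lambda>x. \<Sum>m\<in>S. cnj (c m) * (f x * cnj (g m x) * of_real (delta k x)))"
    by (simp add: sum_distrib_right sum_distrib_left mult_ac)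
  also have "\<dots> = (\<Sum>m\<in>S. integral {0..2*pi} (\<lambda>x. cnj (c m) * (f x * cnj (g m x) * of_real (delta k x))))"
    using assms
    by (intro integral_sum integrable_continuous_interval continuous_intros continuous_on_delta)
      auto
  finally show ?thesis unfolding ip_def by (simp add: sum_distrib_left mult.left_commute)
qed

lemma ip_self_eq_0_imp_eq_0:
  assumes k: "k \<ge> 0" and f: "continuous_on {0..2*pi} f" and ip0: "ip k f f = 0"
    and x: "x \<in> {0..2*pi}" and sin: "sin x \<noteq> 0"
  shows "f x = 0"
proof -
  define r where "r = (\<lambda>x. (cmod (f x))\<^sup>2 * delta k x)"
  have r: "continuous_on {0..2*pi} r"
    unfolding r_def by (intro continuous_intros f continuous_on_delta k)
  have "f x * cnj (f x) * of_real (delta k x) = of_real (r x)" for x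
    unfolding r_def by (simp add: complex_norm_square[symmetric])
  then have "integral {0..2*pi} (\<lambda>x. of_real (r x) :: complex) = 0"
    using ip0 unfolding ip_def by simp
  moreover have "((\<lambda>x. of_real (r x) :: complex) has_integral of_real (integral {0..2*pi} r)) {0..2*pi}"
    using r by (intro has_integral_of_real integrable_integral integrable_continuous_interval)
  ultimately have "integral {0..2*pi} r = 0"
    by (simp add: integral_unique)
  then have "(r has_integral 0) {0..2*pi}"
    using r by (metis integrable_continuous_interval integrable_integral)
  then have "r x = 0"
    using has_integral_0_cbox_imp_0[of 0 "2*pi" r x] r x pi_gt_zero
    by (simp add: r_def delta_nonneg)
  then show "f x = 0"
    using delta_pos[OF sin, of k] by (simp add: r_def)
qed

lemma sin_eq_0_on_0_2pi:
  assumes "x \<in> {0..2*pi}" "sin x = 0"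
  shows "x \<in> {0, pi, 2*pi}"
proof -
  obtain i :: int where i: "x = of_int i * pi"
    using assms sin_zero_iff_int2 by blast
  with assms pi_gt_zero have "0 \<le> i" "i \<le> 2"
    by (simp_all add: zero_le_mult_iff mult_le_cancel_right)
  then have "i \<in> {0, 1, 2}" by auto
  with i show ?thesis by auto
qed

lemma integral_trig_poly_mult_expi:
  fixes c :: "int \<Rightarrow> complex"
  assumes "finite S" "m \<in> S"
  shows "integral {0..2*pi} (\<lambda>x. (\<Sum>l\<in>S. c l * expi l x) * expi (- m) x) = 2 * pi * c m"
proof -
  have "(\<Sum>l\<in>S. c l * expi l x) * expi (- m) x = (\<Sum>l\<in>S. c l * expi (l - m) x)" for x
    unfolding sum_distrib_right
    by (intro sum.cong refl) (simp add: exp_add[symmetric] algebra_simps)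
  then have "integral {0..2*pi} (\<lambda>x. (\<Sum>l\<in>S. c l * expi l x) * expi (- m) x)
      = (\<Sum>l\<in>S. integral {0..2*pi} (\<lambda>x. c l * expi (l - m) x))"
    using assms by (simp only:) (intro integral_sum integrable_continuous_interval continuous_intros)
  also have "\<dots> = (\<Sum>l\<in>S. c l * integral {0..2*pi} (expi (l - m)))"
    by simp
  also have "\<dots> = 2 * pi * c m"
    unfolding integral_expi using assms by (simp add: if_distrib cong: if_cong)
  finally show ?thesis .
qed

lemma trig_poly_coeff_eq_0_if_ip_self_eq_0:
  assumes k: "k \<ge> 0" and S: "finite S" and m: "m \<in> S"
    and ip0: "ip k (\<lambda>x. \<Sum>l\<in>S. c l * expi l x) (\<lambda>x. \<Sum>l\<in>S. c l * expi l x) = 0"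
  shows "c m = 0"
proof -
  have spike: "(\<Sum>l\<in>S. c l * expi l x) = 0" if "x \<in> {0..2*pi}" "x \<notin> {0, pi, 2*pi}" for x
    using that sin_eq_0_on_0_2pi
    by (intro ip_self_eq_0_imp_eq_0[OF k _ ip0] continuous_intros) auto
  have "((\<lambda>x. (\<Sum>l\<in>S. c l * expi l x) * expi (- m) x) has_integral 0) {0..2*pi}"
    by (rule has_integral_spike_finite[of "{0, pi, 2*pi}" _ _ "\<lambda>_. 0"]) (auto simp: spike)
  then show ?thesis
    using integral_trig_poly_mult_expi[OF S m, of c] by (simp add: integral_unique)
qed

section \<open>The Gram matrix\<close>

definition gram :: "real \<Rightarrow> int \<Rightarrow> int \<Rightarrow> complex" where
  "gram k m j = ip k (expi m) (expi j)"

lemma ip_trig_poly_expi: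
  assumes "k \<ge> 0" "finite S"
  shows "ip k (\<lambda>x. \<Sum>m\<in>S. c m * expi m x) (expi j) = (\<Sum>m\<in>S. c m * gram k m j)"
  unfolding gram_def using assms
  by (intro ip_sum_left continuous_intros)

lemma gram_eq_integral:
  "gram k m j = 1 / (2*pi) * integral {0..2*pi} (\<lambda>x. expi (m - j) x * of_real (delta k x))"
proof -
  have "expi m x * cnj (expi j x) = expi (m - j) x" for x
    by (simp add: exp_cnj exp_add[symmetric] algebra_simps)
  then show ?thesis unfolding gram_def ip_def by simp
qed

lemma gram_reflect: "gram k (a - m) j = gram k m (a - j)"
proof -
  have even: "integral {0..2*pi} (\<lambda>x. expi l x * of_real (delta k x))
      = integral {0..2*pi} (\<lambda>x. expi (- l) x * of_real (delta k x))" for l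
    using integral_reflect_2pi[of "\<lambda>x. expi (- l) x * of_real (delta k x)"]
    unfolding expi_reflect delta_reflect by simp
  have diff: "m - (a - j) = - (a - m - j)" by simp
  show ?thesis
    unfolding gram_eq_integral diff even[of "a - m - j"] by simp
qed

lemma gram_nondegenerate:
  assumes k: "k \<ge> 0" and S: "finite S"
    and a: "\<And>j. j \<in> S \<Longrightarrow> (\<Sum>m\<in>S. a m * gram k m j) = 0" and m: "m \<in> S"
  shows "a m = 0"
proof -
  let ?P = "\<lambda>x. \<Sum>m\<in>S. a m * expi m x"
  have "ip k ?P ?P = (\<Sum>j\<in>S. cnj (a j) * ip k ?P (expi j))"
    using k S by (intro ip_sum_right continuous_intros)
  also have "\<dots> = 0"
    using a by (simp add: ip_trig_poly_expi[OF k S])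
  finally show ?thesis
    using trig_poly_coeff_eq_0_if_ip_self_eq_0[OF k S m] by blast
qed

section \<open>The coefficient vectors\<close>

lemma HO_coeffs_iff_gram:
  assumes "k \<ge> 0"
  shows "HO_coeffs k n c \<longleftrightarrow> c n = 1 \<and> (\<forall>j. j \<notin> supp_set n \<longrightarrow> c j = 0) \<and>
    (\<forall>j. tri_less j n \<longrightarrow> (\<Sum>m\<in>supp_set n. c m * gram k m j) = 0)"
  unfolding HO_coeffs_def ip_trig_poly_expi[OF assms finite_supp_set] ..

lemma HO_coeffs_unique:
  assumes k: "k \<ge> 0" and c: "HO_coeffs k n c" and d: "HO_coeffs k n d"
  shows "c = d"
proof -
  have "(\<Sum>m\<in>{j. tri_less j n}. (c m - d m) * gram k m j) = 0" if "tri_less j n" for j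
  proof -
    have "(\<Sum>m\<in>{j. tri_less j n}. c m * gram k m j) = - gram k n j"
      "(\<Sum>m\<in>{j. tri_less j n}. d m * gram k m j) = - gram k n j"
      using c d that unfolding HO_coeffs_iff_gram[OF k] sum_supp_set by (auto simp: add_eq_0_iff)
    then show ?thesis
      by (simp add: left_diff_distrib sum_subtractf)
  qed
  then have pred: "c m = d m" if "tri_less m n" for m
    using gram_nondegenerate[OF k finite_tri_less[of n], where a = "\<lambda>m. c m - d m"] that by simp
  show "c = d"
  proof
    fix m
    show "c m = d m"
      using c d pred unfolding HO_coeffs_def supp_set_def by (cases "m = n"; cases "tri_less m n") auto
  qed
qed

lemma HO_coeffs_exists:
  assumes k: "k \<ge> 0"
  shows "\<exists>c. HO_coeffs k n c"
proof -
  have "\<exists>a. \<forall>j\<in>{j. tri_less j n}. (\<Sum>m\<in>{j. tri_less j n}. a m * gram k m j) = - gram k n j"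
  proof (rule square_system_solvable_if_injective[OF finite_tri_less])
    fix a m
    assume "\<And>j. j \<in> {j. tri_less j n} \<Longrightarrow> (\<Sum>m\<in>{j. tri_less j n}. a m * gram k m j) = 0"
      and "m \<in> {j. tri_less j n}"
    then show "a m = 0"
      by (rule gram_nondegenerate[OF k finite_tri_less])
  qed
  then obtain a where a: "\<forall>j\<in>{j. tri_less j n}. (\<Sum>m\<in>{j. tri_less j n}. a m * gram k m j) = - gram k n j"
    by blast
  define c where "c j = (if j = n then 1 else if tri_less j n then a j else 0)" for j
  have "(\<Sum>m\<in>{j. tri_less j n}. c m * gram k m j) = (\<Sum>m\<in>{j. tri_less j n}. a m * gram k m j)" for j
    by (intro sum.cong) (auto simp: c_def tri_less_irrefl)
  then have "HO_coeffs k n c"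
    unfolding HO_coeffs_iff_gram[OF k] sum_supp_set using a
    by (auto simp: c_def supp_set_def)
  then show ?thesis
    by blast
qed

lemma HO_E_eq:
  assumes "k \<ge> 0" "HO_coeffs k n c"
  shows "HO_E k n x = (\<Sum>m\<in>supp_set n. c m * exp (of_int m * of_real x))"
proof -
  have "(THE c. HO_coeffs k n c) = c"
    using assms HO_coeffs_unique by blast
  then show ?thesis
    unfolding HO_E_def by simp
qed

lemma HO_coeffs_reflect:
  assumes k: "k \<ge> 0" and c: "HO_coeffs k (- n) c"
  shows "HO_coeffs k (n + 1) (\<lambda>j. c (1 - j))"
  unfolding HO_coeffs_iff_gram[OF k]
proof (intro conjI allI impI)
  show "c (1 - (n + 1)) = 1"
    using c unfolding HO_coeffs_def by simp
next
  fix j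
  assume "j \<notin> supp_set (n + 1)"
  then show "c (1 - j) = 0"
    using c unfolding HO_coeffs_def supp_set_reflect_iff by simp
next
  fix j
  assume "tri_less j (n + 1)"
  have "(\<Sum>m\<in>supp_set (n + 1). c (1 - m) * gram k m j)
      = (\<Sum>m\<in>supp_set (- n). c m * gram k (1 - m) j)"
    using sum_supp_set_reflect[of "\<lambda>m. c m * gram k (1 - m) j" n] by simp
  also have "\<dots> = (\<Sum>m\<in>supp_set (- n). c m * gram k m (1 - j))"
    by (simp add: gram_reflect)
  also have "\<dots> = 0"
    using c \<open>tri_less j (n + 1)\<close> unfolding HO_coeffs_iff_gram[OF k] tri_less_reflect by blast
  finally show "(\<Sum>m\<in>supp_set (n + 1). c (1 - m) * gram k m j) = 0" .
qed

theorem mainTheorem2: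
  fixes k :: real and n :: int and x :: real
  assumes "k \<ge> 0"
  shows "HO_E k (n + 1) x = exp (of_real x) * HO_E k (- n) (- x)"
proof -
  obtain c where c: "HO_coeffs k (- n) c"
    using HO_coeffs_exists[OF assms] by blast
  have "HO_E k (n + 1) x = (\<Sum>m\<in>supp_set (n + 1). c (1 - m) * exp (of_int m * of_real x))"
    by (rule HO_E_eq[OF assms HO_coeffs_reflect[OF assms c]])
  also have "\<dots> = (\<Sum>m\<in>supp_set (- n). c m * exp (of_int (1 - m) * of_real x))"
    using sum_supp_set_reflect[of "\<lambda>m. c m * exp (of_int (1 - m) * of_real x)" n] by simp
  also have "\<dots> = exp (of_real x) * (\<Sum>m\<in>supp_set (- n). c m * exp (of_int m * of_real (- x)))"
    unfolding sum_distrib_left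
    by (intro sum.cong refl) (simp add: exp_add[symmetric] algebra_simps exp_diff)
  also have "\<dots> = exp (of_real x) * HO_E k (- n) (- x)"
    using HO_E_eq[OF assms c] by simp
  finally show ?thesis .
qed

end
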